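(* Let $\delta\ge1$, $d_Y\le d_X$, and let $\Sigma=X\sqcup Y$ be a $\delta$-approximately $(d_X,d_Y)$-biregular bipartite graph. Let $a,g\in\mathbb N$, $1\le\psi_X\le d_X-1$ and $1\le\psi_Y\le d_Y/\delta-1$. If $(F,S)$ is a $(\psi_X,\psi_Y)$-approximating pair for some $A\in\mathcal G(a,g)$, then, with $s=|S|$ and $f=|F|$, \[ s\le f+\frac{1}{d_X}\big[(g-f)\psi_Y+(s-a)\psi_X\big].\]
   Context: A bipartite graph $\Sigma$ with parts $X,Y$ is $\delta$-approximately $(d_X,d_Y)$-biregular if every $v\in X$ has degree $d(v)\in[d_X,\delta d_X]$ and every $v\in Y$ has degree $d(v)\in[\delta^{-1}d_Y,d_Y]$. $N(S)$ is the set of neighbours of $S$; $d_B(x)=|N(x)\cap B|$. For $A\subseteq X$, $[A]=\{x\in X:N(x)\subseteq N(A)\}$. A set is 2-linked if it induces a connected subgraph of $\Sigma^2$ (vertices adjacent iff at distance at most 2 in $\Sigma$). $\mathcal G(a,g)=\{A\subseteq X\text{ 2-linked}:|[A]|=a,|N(A)|=g\}$. A $(\psi_X,\psi_Y)$-approximating pair for $A\subseteq X$ is a pair $(F,S)\in 2^Y\times 2^X$ with $F\subseteq N(A)$, $S\supseteq[A]$, $d_F(u)\ge d(u)-\psi_X$ for all $u\in S$, and $d_{X\setminus S}(v)\ge d(v)-\psi_Y$ for all $v\in Y\setminus F$. *)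

theory Defs
  imports Complex_Main
begin

definition bipartite_graph :: "'a set \<Rightarrow> 'a set \<Rightarrow> ('a \<Rightarrow> 'a \<Rightarrow> bool) \<Rightarrow> bool" where
  "bipartite_graph X Y E \<longleftrightarrow> finite X \<and> finite Y \<and> X \<inter> Y = {} \<and>
     (\<forall>u v. E u v \<longleftrightarrow> E v u) \<and>
     (\<forall>u v. E u v \<longrightarrow> (u \<in> X \<and> v \<in> Y) \<or> (u \<in> Y \<and> v \<in> X))"

definition nbhd :: "('a \<Rightarrow> 'a \<Rightarrow> bool) \<Rightarrow> 'a \<Rightarrow> 'a set" where
  "nbhd E v = {u. E v u}"

definition Nbhd :: "('a \<Rightarrow> 'a \<Rightarrow> bool) \<Rightarrow> 'a set \<Rightarrow> 'a set" where
  "Nbhd E S = (\<Union>v\<in>S. nbhd E v)"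

definition deg :: "('a \<Rightarrow> 'a \<Rightarrow> bool) \<Rightarrow> 'a \<Rightarrow> nat" where
  "deg E v = card (nbhd E v)"

definition deg_in :: "('a \<Rightarrow> 'a \<Rightarrow> bool) \<Rightarrow> 'a set \<Rightarrow> 'a \<Rightarrow> nat" where
  "deg_in E B v = card (nbhd E v \<inter> B)"

definition approx_biregular ::
  "real \<Rightarrow> real \<Rightarrow> real \<Rightarrow> 'a set \<Rightarrow> 'a set \<Rightarrow> ('a \<Rightarrow> 'a \<Rightarrow> bool) \<Rightarrow> bool" where
  "approx_biregular \<delta> dX dY X Y E \<longleftrightarrow> bipartite_graph X Y E \<and>
     (\<forall>v\<in>X. dX \<le> real (deg E v) \<and> real (deg E v) \<le> \<delta> * dX) \<and>
     (\<forall>v\<in>Y. dY / \<delta> \<le> real (deg E v) \<and> real (deg E v) \<le> dY)"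

definition closure_X :: "'a set \<Rightarrow> ('a \<Rightarrow> 'a \<Rightarrow> bool) \<Rightarrow> 'a set \<Rightarrow> 'a set" where
  "closure_X X E A = {x\<in>X. nbhd E x \<subseteq> Nbhd E A}"

definition adj2 :: "('a \<Rightarrow> 'a \<Rightarrow> bool) \<Rightarrow> 'a \<Rightarrow> 'a \<Rightarrow> bool" where
  "adj2 E u v \<longleftrightarrow> u \<noteq> v \<and> (E u v \<or> (\<exists>w. E u w \<and> E w v))"

definition two_linked :: "('a \<Rightarrow> 'a \<Rightarrow> bool) \<Rightarrow> 'a set \<Rightarrow> bool" where
  "two_linked E A \<longleftrightarrow>
     (\<forall>u\<in>A. \<forall>v\<in>A. (u, v) \<in> {(x, y). x \<in> A \<and> y \<in> A \<and> adj2 E x y}\<^sup>*)"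

definition calG :: "'a set \<Rightarrow> ('a \<Rightarrow> 'a \<Rightarrow> bool) \<Rightarrow> nat \<Rightarrow> nat \<Rightarrow> 'a set set" where
  "calG X E a g = {A. A \<subseteq> X \<and> two_linked E A \<and>
      card (closure_X X E A) = a \<and> card (Nbhd E A) = g}"

definition approximating_pair ::
  "'a set \<Rightarrow> 'a set \<Rightarrow> ('a \<Rightarrow> 'a \<Rightarrow> bool) \<Rightarrow> real \<Rightarrow> real \<Rightarrow> 'a set \<Rightarrow> 'a set \<Rightarrow> 'a set \<Rightarrow> bool" where
  "approximating_pair X Y E \<psi>X \<psi>Y A F S \<longleftrightarrow>
     F \<subseteq> Y \<and> S \<subseteq> X \<and> F \<subseteq> Nbhd E A \<and> closure_X X E A \<subseteq> S \<and>
     (\<forall>u\<in>S. real (deg_in E F u) \<ge> real (deg E u) - \<psi>X) \<and>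
     (\<forall>v\<in>Y - F. real (deg_in E (X - S) v) \<ge> real (deg E v) - \<psi>Y)"

end

theory Submission
  imports Defs
begin

text \<open>Count the edges between \<open>S\<close> and \<open>N(A)\<close> in two ways. Every \<open>u \<in> S\<close> sends at least
  \<open>d(u) - \<psi>\<^sub>X \<ge> d\<^sub>X - \<psi>\<^sub>X\<close> edges into \<open>F \<subseteq> N(A)\<close>, and all of its \<open>d(u) \<ge> d\<^sub>X\<close> edges if
  \<open>u \<in> [A]\<close>; so there are at least \<open>s d\<^sub>X - (s - a) \<psi>\<^sub>X\<close> of them. Every \<open>v \<in> N(A)\<close> receives at
  most \<open>d(v) \<le> d\<^sub>Y \<le> d\<^sub>X\<close> of them, and at most \<open>\<psi>\<^sub>Y\<close> if \<open>v \<notin> F\<close>, since then all but \<open>\<psi>\<^sub>Y\<close> of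
  its neighbours lie outside \<open>S\<close>; so there are at most \<open>f d\<^sub>X + (g - f) \<psi>\<^sub>Y\<close> of them.\<close>

lemma deg_in_eq_sum:
  assumes "finite B"
  shows "deg_in E B u = (\<Sum>v\<in>B. if E u v then 1 else 0)"
proof -
  have "nbhd E u \<inter> B = {v\<in>B. E u v}" by (auto simp: nbhd_def)
  then show ?thesis
    using sum.inter_filter[OF assms, of "\<lambda>_. 1::nat" "E u"] by (simp add: deg_in_def)
qed

lemma sum_deg_in_swap:
  assumes "finite S" "finite T" "\<forall>u v. E u v \<longleftrightarrow> E v u"
  shows "(\<Sum>u\<in>S. deg_in E T u) = (\<Sum>v\<in>T. deg_in E S v)"
proof -
  have "(\<Sum>u\<in>S. deg_in E T u) = (\<Sum>u\<in>S. \<Sum>v\<in>T. if E u v then 1 else 0)"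
    using assms(2) by (simp add: deg_in_eq_sum)
  also have "\<dots> = (\<Sum>v\<in>T. \<Sum>u\<in>S. if E v u then 1 else 0)"
    using assms(3) by (subst sum.swap) simp
  also have "\<dots> = (\<Sum>v\<in>T. deg_in E S v)"
    using assms(1) by (simp add: deg_in_eq_sum)
  finally show ?thesis .
qed

lemma deg_in_mono:
  assumes "B \<subseteq> B'" "finite B'"
  shows "deg_in E B u \<le> deg_in E B' u"
  unfolding deg_in_def using assms by (intro card_mono) auto

lemma deg_eq_deg_in_add_deg_in_Diff:
  assumes "nbhd E v \<subseteq> X" "finite X"
  shows "deg E v = deg_in E S v + deg_in E (X - S) v"
proof -
  have "finite (nbhd E v)" using assms finite_subset by blast
  then have "card (nbhd E v) = card (nbhd E v \<inter> S) + card (nbhd E v - S)"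
    by (rule card_Int_Diff)
  moreover have "nbhd E v - S = nbhd E v \<inter> (X - S)" using assms(1) by blast
  ultimately show ?thesis by (simp add: deg_def deg_in_def)
qed

lemma sum_if_mem_const:
  fixes p q :: real
  assumes "finite T" "B \<subseteq> T"
  shows "(\<Sum>x\<in>T. if x \<in> B then p else q) = card B * p + (real (card T) - card B) * q"
proof -
  have "(\<Sum>x\<in>T. if x \<in> B then p else q) = (\<Sum>x\<in>B. p) + (\<Sum>x\<in>T - B. q)"
    using assms by (simp add: sum.If_cases Int_absorb1 Diff_eq)
  then show ?thesis
    using assms by (simp add: card_Diff_subset finite_subset card_mono of_nat_diff)
qed

lemma bipartite_graph_nbhd_subset:
  assumes "bipartite_graph X Y E"
  shows "x \<in> X \<Longrightarrow> nbhd E x \<subseteq> Y" and "y \<in> Y \<Longrightarrow> nbhd E y \<subseteq> X"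
  using assms unfolding bipartite_graph_def nbhd_def by blast+

lemma bipartite_graph_Nbhd_subset:
  assumes "bipartite_graph X Y E" "A \<subseteq> X"
  shows "Nbhd E A \<subseteq> Y"
  using assms bipartite_graph_nbhd_subset(1) by (fastforce simp: Nbhd_def)

lemma deg_in_Nbhd_if_mem_closure_X:
  assumes "u \<in> closure_X X E A"
  shows "deg_in E (Nbhd E A) u = deg E u"
  using assms by (auto simp: closure_X_def deg_in_def deg_def Int_absorb2)

context
  fixes X Y :: "'a set" and E :: "'a \<Rightarrow> 'a \<Rightarrow> bool" and d \<psi>X \<psi>Y :: real and A F S :: "'a set"
  assumes bipartite: "bipartite_graph X Y E"
    and deg_X: "\<forall>u\<in>X. d \<le> real (deg E u)"
    and deg_Y: "\<forall>v\<in>Y. real (deg E v) \<le> d"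
    and A_sub: "A \<subseteq> X"
    and pair: "approximating_pair X Y E \<psi>X \<psi>Y A F S"
begin

lemma approximating_pair_deg_in_Nbhd_lower:
  assumes "u \<in> S"
  shows "(if u \<in> closure_X X E A then d else d - \<psi>X) \<le> real (deg_in E (Nbhd E A) u)"
proof -
  have "finite (Nbhd E A)"
    using bipartite_graph_Nbhd_subset[OF bipartite A_sub] bipartite
    by (auto simp: bipartite_graph_def intro: finite_subset)
  then have "deg_in E F u \<le> deg_in E (Nbhd E A) u"
    using pair by (intro deg_in_mono) (auto simp: approximating_pair_def)
  moreover have "real (deg E u) - \<psi>X \<le> deg_in E F u" and "d \<le> deg E u"
    using assms pair deg_X by (auto simp: approximating_pair_def)
  ultimately show ?thesis
    using deg_in_Nbhd_if_mem_closure_X[of u X E A] by auto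
qed

lemma approximating_pair_deg_in_upper:
  assumes "v \<in> Nbhd E A"
  shows "real (deg_in E S v) \<le> (if v \<in> F then d else \<psi>Y)"
proof -
  have v_Y: "v \<in> Y" using assms bipartite A_sub bipartite_graph_Nbhd_subset by blast
  have "nbhd E v \<subseteq> X" "finite X"
    using bipartite_graph_nbhd_subset(2)[OF bipartite v_Y] bipartite
    by (auto simp: bipartite_graph_def)
  then have "deg E v = deg_in E S v + deg_in E (X - S) v"
    by (rule deg_eq_deg_in_add_deg_in_Diff)
  moreover have "real (deg E v) \<le> d" using v_Y deg_Y by blast
  moreover have "v \<notin> F \<Longrightarrow> real (deg E v) - \<psi>Y \<le> deg_in E (X - S) v"
    using v_Y pair by (auto simp: approximating_pair_def)
  ultimately show ?thesis by auto
qed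

lemma approximating_pair_edge_count:
  "card S * d - (real (card S) - card (closure_X X E A)) * \<psi>X
     \<le> card F * d + (real (card (Nbhd E A)) - card F) * \<psi>Y"
proof -
  let ?C = "closure_X X E A" and ?G = "Nbhd E A"
  have C_S: "?C \<subseteq> S" and F_G: "F \<subseteq> ?G" and S_X: "S \<subseteq> X"
    using pair by (auto simp: approximating_pair_def)
  have fin_S: "finite S" and fin_G: "finite ?G"
    using bipartite S_X bipartite_graph_Nbhd_subset[OF bipartite A_sub]
    by (auto simp: bipartite_graph_def intro: finite_subset)
  have "card S * d - (real (card S) - card ?C) * \<psi>X = (\<Sum>u\<in>S. if u \<in> ?C then d else d - \<psi>X)"
    using fin_S C_S by (simp add: sum_if_mem_const algebra_simps)
  also have "\<dots> \<le> (\<Sum>u\<in>S. real (deg_in E ?G u))"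
    by (intro sum_mono approximating_pair_deg_in_Nbhd_lower)
  also have "\<dots> = (\<Sum>v\<in>?G. real (deg_in E S v))"
    using sum_deg_in_swap[OF fin_S fin_G] bipartite
    by (metis bipartite_graph_def of_nat_sum)
  also have "\<dots> \<le> (\<Sum>v\<in>?G. if v \<in> F then d else \<psi>Y)"
    by (intro sum_mono approximating_pair_deg_in_upper)
  also have "\<dots> = card F * d + (real (card ?G) - card F) * \<psi>Y"
    using fin_G F_G by (rule sum_if_mem_const)
  finally show ?thesis .
qed

end

theorem proposition2p3:
  fixes X Y :: "'a set" and E :: "'a \<Rightarrow> 'a \<Rightarrow> bool"
    and \<delta> dX dY \<psi>X \<psi>Y :: real and a g :: nat and A F S :: "'a set"
  assumes "\<delta> \<ge> 1" and "dY \<le> dX"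
    and "approx_biregular \<delta> dX dY X Y E"
    and "1 \<le> \<psi>X" and "\<psi>X \<le> dX - 1"
    and "1 \<le> \<psi>Y" and "\<psi>Y \<le> dY / \<delta> - 1"
    and "A \<in> calG X E a g"
    and "approximating_pair X Y E \<psi>X \<psi>Y A F S"
  shows "real (card S) \<le> real (card F)
           + (1 / dX) * ((real g - real (card F)) * \<psi>Y + (real (card S) - real a) * \<psi>X)"
proof -
  have bipartite: "bipartite_graph X Y E" and deg_X: "\<forall>u\<in>X. dX \<le> real (deg E u)"
    and deg_Y: "\<forall>v\<in>Y. real (deg E v) \<le> dX"
    using assms(2,3) by (fastforce simp: approx_biregular_def)+
  have A_sub: "A \<subseteq> X" and "card (closure_X X E A) = a" "card (Nbhd E A) = g"
    using assms(8) by (auto simp: calG_def)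
  then have "card S * dX - (real (card S) - a) * \<psi>X \<le> card F * dX + (real g - card F) * \<psi>Y"
    using approximating_pair_edge_count[OF bipartite deg_X deg_Y A_sub assms(9)] by simp
  moreover have "dX > 0" using assms(4,5) by linarith
  ultimately show ?thesis by (simp add: field_simps)
qed

end
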